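(* Let $A$ be a densely defined closed linear operator on a complex Banach space $X$, and let $B$ be a bounded linear operator on $X$ such that (a) $BA\subset AB$, and (b) the point spectrum of $B$ is empty. Then $A$ has no eigenvalues of finite multiplicity. *)

theory Defs
  imports "HOL-Analysis.Analysis"
begin

class complex_vector = real_vector +
  fixes scaleC :: "complex \<Rightarrow> 'a \<Rightarrow> 'a"
  assumes scaleC_add_right: "scaleC a (x + y) = scaleC a x + scaleC a y"
    and scaleC_add_left: "scaleC (a + b) x = scaleC a x + scaleC b x"
    and scaleC_scaleC: "scaleC a (scaleC b x) = scaleC (a * b) x"
    and scaleC_one: "scaleC 1 x = x"
    and scaleR_scaleC: "scaleR r x = scaleC (complex_of_real r) x"

class complex_normed_vector = complex_vector + real_normed_vector +
  assumes norm_scaleC: "norm (scaleC a x) = cmod a * norm x"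

class complex_banach = complex_normed_vector + banach

definition csubspace :: "'a::complex_vector set \<Rightarrow> bool" where
  "csubspace S \<longleftrightarrow> 0 \<in> S \<and> (\<forall>x\<in>S. \<forall>y\<in>S. x + y \<in> S) \<and> (\<forall>c. \<forall>x\<in>S. scaleC c x \<in> S)"

definition cspan :: "'a::complex_vector set \<Rightarrow> 'a set" where
  "cspan S = {\<Sum>x\<in>T. scaleC (c x) x | T c. finite T \<and> T \<subseteq> S}"

definition cfinite_dim :: "'a::complex_vector set \<Rightarrow> bool" where
  "cfinite_dim E \<longleftrightarrow> (\<exists>S. finite S \<and> S \<subseteq> E \<and> E = cspan S)"

definition clinear_on :: "'a::complex_vector set \<Rightarrow> ('a \<Rightarrow> 'a) \<Rightarrow> bool" where
  "clinear_on D A \<longleftrightarrow> csubspace D \<and>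
     (\<forall>x\<in>D. \<forall>y\<in>D. A (x + y) = A x + A y) \<and> (\<forall>c. \<forall>x\<in>D. A (scaleC c x) = scaleC c (A x))"

definition graph_on :: "'a set \<Rightarrow> ('a \<Rightarrow> 'b) \<Rightarrow> ('a \<times> 'b) set" where
  "graph_on D A = {(x, A x) | x. x \<in> D}"

definition densely_defined_closed_op :: "'a::complex_normed_vector set \<Rightarrow> ('a \<Rightarrow> 'a) \<Rightarrow> bool" where
  "densely_defined_closed_op D A \<longleftrightarrow> clinear_on D A \<and> closure D = UNIV \<and> closed (graph_on D A)"

definition bounded_clinear :: "('a::complex_normed_vector \<Rightarrow> 'a) \<Rightarrow> bool" where
  "bounded_clinear B \<longleftrightarrow> (\<forall>x y. B (x + y) = B x + B y) \<and> (\<forall>c x. B (scaleC c x) = scaleC c (B x))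
     \<and> (\<exists>K. \<forall>x. norm (B x) \<le> norm x * K)"

text \<open>B A \<subseteq> A B, where dom(BA) = D and dom(AB) = {x. B x \<in> D}.\<close>

definition commutes_incl :: "'a set \<Rightarrow> ('a \<Rightarrow> 'a) \<Rightarrow> ('a \<Rightarrow> 'a) \<Rightarrow> bool" where
  "commutes_incl D A B \<longleftrightarrow> (\<forall>x\<in>D. B x \<in> D \<and> A (B x) = B (A x))"

definition point_spectrum_bdd :: "('a::complex_vector \<Rightarrow> 'a) \<Rightarrow> complex set" where
  "point_spectrum_bdd B = {\<mu>. \<exists>x. x \<noteq> 0 \<and> B x = scaleC \<mu> x}"

definition eigenspace_on :: "'a::complex_vector set \<Rightarrow> ('a \<Rightarrow> 'a) \<Rightarrow> complex \<Rightarrow> 'a set" where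
  "eigenspace_on D A l = {x\<in>D. A x = scaleC l x}"

definition eigenvalue_on :: "'a::complex_vector set \<Rightarrow> ('a \<Rightarrow> 'a) \<Rightarrow> complex \<Rightarrow> bool" where
  "eigenvalue_on D A l \<longleftrightarrow> (\<exists>x\<in>D. x \<noteq> 0 \<and> A x = scaleC l x)"

definition finite_mult_eigenvalue :: "'a::complex_vector set \<Rightarrow> ('a \<Rightarrow> 'a) \<Rightarrow> complex \<Rightarrow> bool" where
  "finite_mult_eigenvalue D A l \<longleftrightarrow> eigenvalue_on D A l \<and> cfinite_dim (eigenspace_on D A l)"

end

theory Submission
  imports Defs "HOL-Computational_Algebra.Fundamental_Theorem_Algebra"
begin

text \<open>If \<open>\<lambda>\<close> were an eigenvalue of \<open>A\<close> of finite multiplicity, its eigenspace would be a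
  nonzero finite-dimensional subspace, and \<open>BA \<subseteq> AB\<close> makes it \<open>B\<close>-invariant. Any nonzero
  vector \<open>v\<close> there is annihilated by some nonzero polynomial in \<open>B\<close>, since the iterates
  \<open>B\<^sup>i v\<close> cannot all be independent; splitting off a linear factor \<open>B - r\<close> of an annihilator
  of minimal degree yields an eigenvector of \<open>B\<close>, contradicting the emptiness of its point
  spectrum.\<close>

interpretation cv: vector_space "scaleC :: complex \<Rightarrow> 'a::complex_vector \<Rightarrow> 'a"
  by unfold_locales (simp_all add: scaleC_add_right scaleC_add_left scaleC_scaleC scaleC_one)

abbreviation clinear :: "('a::complex_vector \<Rightarrow> 'b::complex_vector) \<Rightarrow> bool" where
  "clinear \<equiv> Vector_Spaces.linear scaleC scaleC"

lemma bounded_clinear_imp_clinear: "bounded_clinear B \<Longrightarrow> clinear B"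
  unfolding bounded_clinear_def Vector_Spaces.linear_iff
  by (simp add: cv.vector_space_axioms)

lemma clinear_sum: "clinear B \<Longrightarrow> B (sum f S) = (\<Sum>x\<in>S. B (f x))"
  unfolding linear_iff_module_hom by (rule module_hom.sum)

lemma clinear_scaleC: "clinear B \<Longrightarrow> B (scaleC c x) = scaleC c (B x)"
  unfolding linear_iff_module_hom by (rule module_hom.scale)

lemma cspan_eq_span: "cspan S = cv.span S"
  unfolding cspan_def cv.span_explicit by blast

lemma cspan_family_dependent:
  fixes f :: "nat \<Rightarrow> 'a::complex_vector"
  assumes "finite S" "card S \<le> n" and f: "\<And>i. i \<le> n \<Longrightarrow> f i \<in> cspan S"
  shows "\<exists>c. (\<exists>i\<le>n. c i \<noteq> 0) \<and> (\<Sum>i\<le>n. scaleC (c i) (f i)) = 0"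
proof (cases "inj_on f {..n}")
  case True
  have "cv.dependent (f ` {..n})"
  proof (rule ccontr)
    assume "cv.independent (f ` {..n})"
    moreover have "f ` {..n} \<subseteq> cv.span S" using f cspan_eq_span by blast
    ultimately have "card (f ` {..n}) \<le> card S"
      using cv.independent_span_bound[OF \<open>finite S\<close>] by blast
    with True \<open>card S \<le> n\<close> show False by (simp add: card_image)
  qed
  then obtain U u w where U: "finite U" "U \<subseteq> f ` {..n}" "w \<in> U" "u w \<noteq> 0"
    "(\<Sum>x\<in>U. scaleC (u x) x) = 0"
    unfolding cv.dependent_explicit by blast
  define c where "c i = (if f i \<in> U then u (f i) else 0)" for i
  obtain i where i: "i \<le> n" "w = f i" using U by blast
  have "(\<Sum>i\<le>n. scaleC (c i) (f i)) = (\<Sum>i\<in>{..n} \<inter> f -` U. scaleC (u (f i)) (f i))"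
    by (rule sum.mono_neutral_cong_right) (auto simp: c_def)
  also have "\<dots> = (\<Sum>x\<in>f ` ({..n} \<inter> f -` U). scaleC (u x) x)"
    by (rule sum.reindex[symmetric, unfolded o_def]) (use True in \<open>auto intro: inj_on_subset\<close>)
  also have "f ` ({..n} \<inter> f -` U) = U" using U(2) by blast
  finally have "(\<Sum>i\<le>n. scaleC (c i) (f i)) = 0" using U(5) by simp
  moreover have "c i \<noteq> 0" using i U by (simp add: c_def)
  ultimately show ?thesis using i by blast
next
  case False
  then obtain i j where ij: "i \<le> n" "j \<le> n" "i \<noteq> j" "f i = f j"
    unfolding inj_on_def by auto
  define c where "c k = (if k = i then 1 else if k = j then -1 else (0::complex))" for k
  have "(\<Sum>k\<le>n. scaleC (c k) (f k)) = (\<Sum>k\<in>{i,j}. scaleC (c k) (f k))"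
    by (rule sum.mono_neutral_right) (use ij in \<open>auto simp: c_def\<close>)
  also have "\<dots> = 0" using ij by (simp add: c_def)
  finally show ?thesis using ij by (intro exI[of _ c]) (auto simp: c_def)
qed

definition poly_op :: "('a \<Rightarrow> 'a) \<Rightarrow> complex poly \<Rightarrow> 'a \<Rightarrow> 'a::complex_vector" where
  "poly_op B p w = (\<Sum>i\<le>degree p. scaleC (coeff p i) ((B ^^ i) w))"

lemma poly_op_eq_sum_atMost:
  "degree p \<le> N \<Longrightarrow> poly_op B p w = (\<Sum>i\<le>N. scaleC (coeff p i) ((B ^^ i) w))"
  unfolding poly_op_def by (rule sum.mono_neutral_left) (auto simp: coeff_eq_0)

lemma poly_op_add: "poly_op B (p + q) w = poly_op B p w + poly_op B q w"
  using degree_add_le_max[of p q]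
  by (simp add: poly_op_eq_sum_atMost[of _ "max (degree p) (degree q)"]
      scaleC_add_left sum.distrib)

lemma poly_op_smult: "poly_op B (smult a p) w = scaleC a (poly_op B p w)"
  by (simp add: poly_op_eq_sum_atMost[of "smult a p" "degree p"] poly_op_def degree_smult_le
      cv.scale_sum_right)

lemma poly_op_pCons_0:
  assumes "clinear B"
  shows "poly_op B (pCons 0 q) w = B (poly_op B q w)"
proof -
  have "poly_op B (pCons 0 q) w = (\<Sum>i\<le>Suc (degree q). scaleC (coeff (pCons 0 q) i) ((B ^^ i) w))"
    by (rule poly_op_eq_sum_atMost) (simp add: degree_pCons_le)
  also have "\<dots> = (\<Sum>i\<le>degree q. scaleC (coeff q i) ((B ^^ Suc i) w))"
    by (subst sum.atMost_Suc_shift) simp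
  also have "\<dots> = B (poly_op B q w)"
    by (simp add: poly_op_def clinear_sum[OF assms] clinear_scaleC[OF assms])
  finally show ?thesis .
qed

lemma poly_op_linear_factor:
  assumes "clinear B"
  shows "poly_op B ([:-r, 1:] * q) w = B (poly_op B q w) - scaleC r (poly_op B q w)"
proof -
  have "[:-r, 1:] * q = smult (-r) q + pCons 0 q" by simp
  then have "poly_op B ([:-r, 1:] * q) w = poly_op B (smult (-r) q) w + poly_op B (pCons 0 q) w"
    by (simp only: poly_op_add)
  also have "\<dots> = B (poly_op B q w) - scaleC r (poly_op B q w)"
    by (simp only: poly_op_smult poly_op_pCons_0[OF assms]) simp
  finally show ?thesis .
qed

lemma poly_op_annihilator_imp_eigenvalue:
  assumes "clinear B" "p \<noteq> 0" "poly_op B p v = 0" "v \<noteq> 0"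
  shows "point_spectrum_bdd B \<noteq> {}"
  using assms(2,3)
proof (induction "degree p" arbitrary: p rule: less_induct)
  case less
  show ?case
  proof (cases "degree p = 0")
    case True
    then have "poly_op B p v = scaleC (coeff p 0) v" by (simp add: poly_op_def)
    moreover have "coeff p 0 \<noteq> 0" using less.prems True by (metis leading_coeff_0_iff)
    ultimately show ?thesis using less.prems \<open>v \<noteq> 0\<close> by simp
  next
    case False
    have "\<exists>r. poly p r = 0"
      by (rule fundamental_theorem_of_algebra_alt) (use False in auto)
    then obtain r where "poly p r = 0" by blast
    then obtain q where q: "p = [:-r, 1:] * q"
      by (metis dvdE poly_eq_0_iff_dvd)
    with less.prems have "q \<noteq> 0" by auto
    have "degree p = degree [:-r, 1:] + degree q"
      unfolding q by (rule degree_mult_eq) (use \<open>q \<noteq> 0\<close> in auto)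
    then have deg_q: "degree q < degree p" by simp
    show ?thesis
    proof (cases "poly_op B q v = 0")
      case True
      with less.hyps[OF deg_q \<open>q \<noteq> 0\<close>] show ?thesis .
    next
      case False
      have "B (poly_op B q v) = scaleC r (poly_op B q v)"
        using less.prems q poly_op_linear_factor[OF assms(1), of r q v] by simp
      with False show ?thesis unfolding point_spectrum_bdd_def by blast
    qed
  qed
qed

lemma invariant_finite_dim_imp_eigenvalue:
  assumes B: "clinear B" and "finite S" and inv: "\<And>x. x \<in> cspan S \<Longrightarrow> B x \<in> cspan S"
    and v: "v \<in> cspan S" "v \<noteq> 0"
  shows "point_spectrum_bdd B \<noteq> {}"
proof -
  define n where "n = card S"
  have "(B ^^ i) v \<in> cspan S" for i
    by (induction i) (simp_all add: v inv)
  then obtain c where c: "\<exists>i\<le>n. c i \<noteq> 0" "(\<Sum>i\<le>n. scaleC (c i) ((B ^^ i) v)) = 0"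
    using cspan_family_dependent[OF \<open>finite S\<close>, of n "\<lambda>i. (B ^^ i) v"] n_def by auto
  define p where "p = (\<Sum>i\<le>n. monom (c i) i)"
  have coeff_p: "coeff p k = (if k \<le> n then c k else 0)" for k
    unfolding p_def by (simp add: coeff_sum)
  have "degree p \<le> n"
    by (rule degree_le) (simp add: coeff_p)
  then have "poly_op B p v = 0"
    using c(2) by (simp add: poly_op_eq_sum_atMost coeff_p)
  moreover have "p \<noteq> 0" using c(1) coeff_p by (metis coeff_0)
  ultimately show ?thesis
    using poly_op_annihilator_imp_eigenvalue[OF B] v(2) by blast
qed

lemma eigenspace_on_invariant:
  assumes "commutes_incl D A B" "clinear B" "x \<in> eigenspace_on D A l"
  shows "B x \<in> eigenspace_on D A l"
  using assms clinear_scaleC[OF assms(2)]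
  unfolding eigenspace_on_def commutes_incl_def by auto

theorem lemma3p1:
  fixes D :: "'a::complex_banach set" and A B :: "'a \<Rightarrow> 'a"
  assumes "densely_defined_closed_op D A"
    and "bounded_clinear B"
    and "commutes_incl D A B"
    and "point_spectrum_bdd B = {}"
  shows "\<not> (\<exists>l. finite_mult_eigenvalue D A l)"
proof
  assume "\<exists>l. finite_mult_eigenvalue D A l"
  then obtain l S v where S: "finite S" "eigenspace_on D A l = cspan S"
    and v: "v \<in> eigenspace_on D A l" "v \<noteq> 0"
    unfolding finite_mult_eigenvalue_def eigenvalue_on_def cfinite_dim_def eigenspace_on_def
    by blast
  have B: "clinear B" using assms(2) by (rule bounded_clinear_imp_clinear)
  have "point_spectrum_bdd B \<noteq> {}"
    using invariant_finite_dim_imp_eigenvalue[OF B \<open>finite S\<close>] v S(2)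
      eigenspace_on_invariant[OF assms(3) B]
    by metis
  with assms(4) show False by contradiction
qed

end
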